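(* Let $(k,p,\mathcal{A}_{k,p})$ be one of the following: $k=1,p=3$: $\mathcal{A}_{1,3}=\{3r,3r+1:0\le r\le16\}\setminus\{7,16,24,25,34,43\}$; $k=1,p=5$: $\mathcal{A}_{1,5}=(\{5r,5r+1,5r+2,5r+3:0\le r\le 9\}\cup\{50\})\setminus\{23,48\}$; $k=1,p=7$: $\mathcal{A}_{1,7}=([0,50]\cap\mathbb{Z})\setminus\{6,13,20,27,34,41,47,48\}$; $k=2,p=5$: $\mathcal{A}_{2,5}=(\{5r,5r+1,5r+2:0\le r\le 8\}\cup\{45,50\})\setminus\{21,22\}$; $k=2,p=7$: $\mathcal{A}_{2,7}=([0,50]\cap\mathbb{Z})\setminus(\{7r-1,7r-2:1\le r\le 7\}\cup\{45,46\})$; $k=3,p=5$: $\mathcal{A}_{3,5}=\{0,1,5,6,10,11,15,25,26,30,31,35,36,40,50\}$; $k=3,p=7$: $\mathcal{A}_{3,7}=\{7r,7r+1,7r+2,7r+3:0\le r\le 5\}\cup\{42,49,50\}$; $k=4,p=7$: $\mathcal{A}_{4,7}=\{7r,7r+1,7r+2:0\le r\le 4\}\cup\{35,36,49,50\}$; $k=5,p=7$: $\mathcal{A}_{5,7}=\{0,1,7,8,14,15,21,22,28,49,50\}$. Let $n\ge 2k$ and $a\in\mathcal{A}_{k,p}$. If $p\mid\prod_{i=1}^k(a+n-k+i)$ and $p\nmid a_0a_n$, then $f_{n,a}(x)$ has no factor of degree $k$ in $\mathbb{Q}[x]$. If $p\mid\prod_{i=1}^k(n-k+i)(a+n-k+i)$,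 then $L_n^{(a)}(x)$ has no factor of degree $k$ in $\mathbb{Q}[x]$.
   Context: For integers $n\ge 1$, $a\ge 0$ and integers $a_0,\dots,a_n$, $f_{n,a}(x)=\sum_{j=0}^{n} a_j\frac{x^j}{(j+a)!}$. The generalised Laguerre polynomial is $L_n^{(\alpha)}(x)=\sum_{j=0}^{n}\frac{(n+\alpha)(n-1+\alpha)\cdots(j+1+\alpha)}{(n-j)!\,j!}(-x)^j$. *)

theory Defs
  imports "HOL-Computational_Algebra.Polynomial"
begin

definition fpoly :: "(nat \<Rightarrow> int) \<Rightarrow> nat \<Rightarrow> nat \<Rightarrow> rat poly" where
  "fpoly c n a = (\<Sum>j\<le>n. monom (of_int (c j) / fact (j + a)) j)"

definition laguerre :: "nat \<Rightarrow> nat \<Rightarrow> rat poly" where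
  "laguerre n a = (\<Sum>j\<le>n. monom ((-1) ^ j * (\<Prod>i\<in>{j+1..n}. of_nat (i + a))
                                   / (fact (n - j) * fact j)) j)"

definition has_factor_of_degree :: "rat poly \<Rightarrow> nat \<Rightarrow> bool" where
  "has_factor_of_degree f k \<longleftrightarrow> (\<exists>g :: rat poly. degree g = k \<and> g dvd f)"

definition A_set :: "nat \<Rightarrow> nat \<Rightarrow> nat set" where
  "A_set k p =
    (if k = 1 \<and> p = 3 then
       {m. \<exists>r\<le>16. m = 3*r \<or> m = 3*r+1} - {7,16,24,25,34,43}
     else if k = 1 \<and> p = 5 then
       ({m. \<exists>r\<le>9. m = 5*r \<or> m = 5*r+1 \<or> m = 5*r+2 \<or> m = 5*r+3} \<union> {50}) - {23,48}
     else if k = 1 \<and> p = 7 then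
       {0..50} - {6,13,20,27,34,41,47,48}
     else if k = 2 \<and> p = 5 then
       ({m. \<exists>r\<le>8. m = 5*r \<or> m = 5*r+1 \<or> m = 5*r+2} \<union> {45,50}) - {21,22}
     else if k = 2 \<and> p = 7 then
       {0..50} - ({m. \<exists>r\<in>{1..7}. m = 7*r-1 \<or> m = 7*r-2} \<union> {45,46})
     else if k = 3 \<and> p = 5 then
       {0,1,5,6,10,11,15,25,26,30,31,35,36,40,50}
     else if k = 3 \<and> p = 7 then
       {m. \<exists>r\<le>5. m = 7*r \<or> m = 7*r+1 \<or> m = 7*r+2 \<or> m = 7*r+3} \<union> {42,49,50}
     else if k = 4 \<and> p = 7 then
       {m. \<exists>r\<le>4. m = 7*r \<or> m = 7*r+1 \<or> m = 7*r+2} \<union> {35,36,49,50}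
     else if k = 5 \<and> p = 7 then
       {0,1,7,8,14,15,21,22,28,49,50}
     else {})"

end

theory Submission
  imports Defs "Berlekamp_Zassenhaus.Factorize_Rat_Poly"
begin

text \<open>Clearing denominators, (n + a)! f_{n,a} and n! L_n^(a) become integer polynomials F
  whose j-th coefficient is d_j (n + a)!/(j + a)!, with p not dividing d_0 d_n. The divisibility
  hypothesis makes p divide every coefficient of index at most n - k, so if F = G H over the
  integers (Gauss' lemma) with deg G = k, then p divides G(0). Give the j-th coefficient of a
  polynomial the weight k v_p + j. At the last minimisers i_0, j_0 of this weight on G and H, the
  coefficient of F at i_0 + j_0 has weight at most the sum of theirs, and i_0 > 0 because p
  divides G(0). But a \<in> A_{k,p} means k v_p((a + 1) \<cdots> (a + j)) < j for all j \<ge> 1 (a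
  finite check through Legendre's formula), which makes the constant term the unique minimiser
  of the weight on F.\<close>

section \<open>Weighted valuations of products\<close>

lemma not_dvd_coeff_mult_single_term:
  fixes G H :: "'a::comm_ring_1 poly"
  assumes "i0 \<le> s" and "\<not> q dvd coeff G i0 * coeff H (s - i0)"
    and "\<And>i. i \<le> s \<Longrightarrow> i \<noteq> i0 \<Longrightarrow> q dvd coeff G i * coeff H (s - i)"
  shows "\<not> q dvd coeff (G * H) s"
proof
  assume "q dvd coeff (G * H) s"
  moreover have "coeff (G * H) s = coeff G i0 * coeff H (s - i0)
      + (\<Sum>i\<in>{..s} - {i0}. coeff G i * coeff H (s - i))"
    using assms(1) by (simp add: coeff_mult sum.remove)
  moreover have "q dvd (\<Sum>i\<in>{..s} - {i0}. coeff G i * coeff H (s - i))"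
    using assms(3) by (auto intro: dvd_sum)
  ultimately show False
    using assms(2) by (simp add: dvd_add_left_iff)
qed

lemma prime_elem_dvd_coeff_0_of_factor:
  fixes G H :: "'a::idom poly"
  assumes "prime_elem q" and "\<not> q dvd lead_coeff H"
    and "\<And>j. j \<le> degree H \<Longrightarrow> q dvd coeff (G * H) j"
  shows "q dvd coeff G 0"
proof (rule ccontr)
  assume G0: "\<not> q dvd coeff G 0"
  define t where "t = (LEAST t. \<not> q dvd coeff H t)"
  have Ht: "\<not> q dvd coeff H t"
    unfolding t_def using assms(2) by (rule LeastI)
  have "t \<le> degree H"
    unfolding t_def using assms(2) by (rule Least_le)
  moreover have "\<not> q dvd coeff (G * H) t"
  proof (rule not_dvd_coeff_mult_single_term[of 0])
    show "\<not> q dvd coeff G 0 * coeff H (t - 0)"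
      using G0 Ht assms(1) by (simp add: prime_elem_dvd_mult_iff)
    show "q dvd coeff G i * coeff H (t - i)" if "i \<le> t" "i \<noteq> 0" for i
      using not_less_Least[of "t - i" "\<lambda>t. \<not> q dvd coeff H t"] that
      unfolding t_def[symmetric] by simp
  qed simp
  ultimately show False using assms(3) by blast
qed

definition last_minimizer :: "(nat \<Rightarrow> nat) \<Rightarrow> nat set \<Rightarrow> nat \<Rightarrow> bool" where
  "last_minimizer w S i \<longleftrightarrow> i \<in> S \<and> (\<forall>j\<in>S. w i \<le> w j) \<and> (\<forall>j\<in>S. i < j \<longrightarrow> w i < w j)"

lemma ex_last_minimizer:
  assumes "finite S" and "S \<noteq> {}"
  obtains i where "last_minimizer w S i"
proof -
  define m where "m = Min (w ` S)"
  define I where "I = {i\<in>S. w i = m}"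
  have m: "m \<in> w ` S" "\<forall>j\<in>S. m \<le> w j"
    unfolding m_def using assms by auto
  then have "finite I" "I \<noteq> {}"
    unfolding I_def using assms by auto
  then have "Max I \<in> I" "\<forall>j\<in>I. j \<le> Max I" by auto
  moreover have "w (Max I) < w j" if "j \<in> S" "Max I < j" for j
    using m(2) that \<open>\<forall>j\<in>I. j \<le> Max I\<close> \<open>Max I \<in> I\<close>
    unfolding I_def by (metis (mono_tags, lifting) le_less mem_Collect_eq not_le)
  ultimately have "last_minimizer w S (Max I)"
    using m unfolding last_minimizer_def I_def by auto
  then show ?thesis by (rule that)
qed

definition weighted_valuation :: "'a::factorial_semiring \<Rightarrow> nat \<Rightarrow> 'a poly \<Rightarrow> nat \<Rightarrow> nat" where
  "weighted_valuation q k F i = k * multiplicity q (coeff F i) + i"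

lemma coeff_mult_at_last_minimizers:
  fixes G H :: "'a::{factorial_semiring, idom} poly"
  assumes q: "prime_elem q"
    and i0: "last_minimizer (weighted_valuation q k G) {i. coeff G i \<noteq> 0} i0"
    and j0: "last_minimizer (weighted_valuation q k H) {j. coeff H j \<noteq> 0} j0"
  shows "coeff (G * H) (i0 + j0) \<noteq> 0"
    and "weighted_valuation q k (G * H) (i0 + j0)
           \<le> weighted_valuation q k G i0 + weighted_valuation q k H j0"
proof -
  let ?v = "multiplicity q" and ?wG = "weighted_valuation q k G" and ?wH = "weighted_valuation q k H"
  define s where "s = i0 + j0"
  define e where "e = ?v (coeff G i0) + ?v (coeff H j0)"
  have nz: "coeff G i0 \<noteq> 0" "coeff H j0 \<noteq> 0"
    using i0 j0 by (auto simp: last_minimizer_def)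
  have G_min: "?wG i0 \<le> ?wG i" and G_last: "i0 < i \<Longrightarrow> ?wG i0 < ?wG i"
    if "coeff G i \<noteq> 0" for i
    using i0 that unfolding last_minimizer_def by auto
  have H_min: "?wH j0 \<le> ?wH j" and H_last: "j0 < j \<Longrightarrow> ?wH j0 < ?wH j"
    if "coeff H j \<noteq> 0" for j
    using j0 that unfolding last_minimizer_def by auto
  have q_nonunit: "\<not> is_unit q"
    using q by (rule prime_elem_not_unit)
  have v_mult: "?v (x * y) = ?v x + ?v y" if "x \<noteq> 0" "y \<noteq> 0" for x y
    using prime_elem_multiplicity_mult_distrib[OF q that] .
  have "\<not> q ^ Suc e dvd coeff (G * H) s"
  proof (rule not_dvd_coeff_mult_single_term[of i0])
    show "\<not> q ^ Suc e dvd coeff G i0 * coeff H (s - i0)"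
    proof
      assume "q ^ Suc e dvd coeff G i0 * coeff H (s - i0)"
      then have "Suc e \<le> ?v (coeff G i0 * coeff H j0)"
        using nz q_nonunit unfolding s_def by (intro multiplicity_geI) auto
      then show False
        using nz v_mult unfolding e_def by simp
    qed
    show "q ^ Suc e dvd coeff G i * coeff H (s - i)" if "i \<le> s" "i \<noteq> i0" for i
    proof (cases "coeff G i = 0 \<or> coeff H (s - i) = 0")
      case False
      \<comment> \<open>Minimality of i0 and j0, strict on the side whose index exceeds the minimiser.\<close>
      have "?wG i0 + ?wH j0 < ?wG i + ?wH (s - i)"
      proof (cases "i0 < i")
        case True
        then show ?thesis
          using False G_last H_min by (intro add_less_le_mono) auto
      next
        case False': False
        then have "j0 < s - i"
          using that unfolding s_def by auto
        then show ?thesis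
          using False G_min H_last by (intro add_le_less_mono) auto
      qed
      then have "k * e < k * (?v (coeff G i) + ?v (coeff H (s - i)))"
        using that unfolding weighted_valuation_def e_def s_def by (simp add: algebra_simps)
      then have "Suc e \<le> ?v (coeff G i * coeff H (s - i))"
        using False v_mult by (simp add: Suc_le_eq)
      then show ?thesis by (rule multiplicity_dvd')
    qed auto
  qed (simp add: s_def)
  then show "coeff (G * H) (i0 + j0) \<noteq> 0"
    unfolding s_def by auto
  from \<open>\<not> q ^ Suc e dvd coeff (G * H) s\<close> have "?v (coeff (G * H) s) \<le> e"
    using multiplicity_dvd'[of "Suc e" q] by (meson not_less_eq_eq)
  then have "k * ?v (coeff (G * H) s) \<le> k * e"
    by (rule mult_le_mono2)
  then show "weighted_valuation q k (G * H) (i0 + j0) \<le> ?wG i0 + ?wH j0"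
    unfolding weighted_valuation_def e_def s_def distrib_left by linarith
qed

lemma weighted_valuation_no_factor_of_degree:
  fixes G H :: "'a::{factorial_semiring, idom} poly"
  assumes q: "prime_elem q" and k: "1 \<le> k" and deg_G: "degree G = k"
    and lead: "\<not> q dvd lead_coeff (G * H)"
    and low: "\<And>j. j \<le> degree H \<Longrightarrow> q dvd coeff (G * H) j"
    and coeff_0: "coeff (G * H) 0 \<noteq> 0"
    and unique_min: "\<And>j. 0 < j \<Longrightarrow> coeff (G * H) j \<noteq> 0 \<Longrightarrow>
        weighted_valuation q k (G * H) 0 < weighted_valuation q k (G * H) j"
  shows False
proof -
  let ?wG = "weighted_valuation q k G" and ?wH = "weighted_valuation q k H"
  have lead_G: "\<not> q dvd lead_coeff G" and lead_H: "\<not> q dvd lead_coeff H"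
    using lead by (auto simp: lead_coeff_mult)
  then have "G \<noteq> 0" "H \<noteq> 0" by auto
  have fin: "finite {i. coeff G i \<noteq> 0}" "finite {j. coeff H j \<noteq> 0}"
    by (auto intro: finite_subset[of _ "{..degree _}"] le_degree)
  have "coeff G (degree G) \<noteq> 0" "coeff H (degree H) \<noteq> 0"
    using \<open>G \<noteq> 0\<close> \<open>H \<noteq> 0\<close> by simp_all
  then have ne: "{i. coeff G i \<noteq> 0} \<noteq> {}" "{j. coeff H j \<noteq> 0} \<noteq> {}"
    by blast+
  obtain i0 where i0: "last_minimizer ?wG {i. coeff G i \<noteq> 0} i0"
    using fin(1) ne(1) by (rule ex_last_minimizer)
  obtain j0 where j0: "last_minimizer ?wH {j. coeff H j \<noteq> 0} j0"
    using fin(2) ne(2) by (rule ex_last_minimizer)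
  have c0: "coeff G 0 \<noteq> 0" "coeff H 0 \<noteq> 0"
    using coeff_0 by (simp_all add: coeff_mult_0)
  have "q dvd coeff G 0"
    using prime_elem_dvd_coeff_0_of_factor[OF q lead_H low] by blast
  \<comment> \<open>As q divides G(0), the weight of x^k in G is at most that of the constant term.\<close>
  have "0 < i0"
  proof (rule ccontr)
    assume "\<not> 0 < i0"
    moreover have "coeff G k \<noteq> 0"
      using lead_G deg_G by (metis dvd_0_right)
    ultimately have "?wG 0 < ?wG k"
      using i0 k unfolding last_minimizer_def by auto
    moreover from \<open>coeff G 0 \<noteq> 0\<close> have "0 < multiplicity q (coeff G 0)"
      using multiplicity_gt_zero_iff[OF _ prime_elem_not_unit[OF q]] \<open>q dvd coeff G 0\<close> by simp
    ultimately show False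
      using lead_G deg_G unfolding weighted_valuation_def by (simp add: not_dvd_imp_multiplicity_0)
  qed
  have "weighted_valuation q k (G * H) (i0 + j0) \<le> ?wG i0 + ?wH j0"
    using coeff_mult_at_last_minimizers(2)[OF q i0 j0] .
  also have "\<dots> \<le> ?wG 0 + ?wH 0"
    using i0 j0 c0 unfolding last_minimizer_def by (intro add_mono) auto
  also have "\<dots> = weighted_valuation q k (G * H) 0"
    using prime_elem_multiplicity_mult_distrib[OF q c0]
    by (simp add: weighted_valuation_def coeff_mult_0 algebra_simps)
  finally show False
    using unique_min[of "i0 + j0"] coeff_mult_at_last_minimizers(1)[OF q i0 j0] \<open>0 < i0\<close> by simp
qed

section \<open>Digit sums and Legendre's formula\<close>

fun digit_sum :: "nat \<Rightarrow> nat \<Rightarrow> nat" where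
  "digit_sum p m = (if p \<le> 1 \<or> m = 0 then 0 else m mod p + digit_sum p (m div p))"

declare digit_sum.simps [simp del]

lemma digit_sum_eq: "1 < p \<Longrightarrow> digit_sum p m = m mod p + digit_sum p (m div p)"
  by (cases "m = 0") (simp_all add: digit_sum.simps)

lemma digit_sum_0 [simp]: "digit_sum p 0 = 0"
  by (simp add: digit_sum.simps)

lemma digit_sum_Suc [simp]: "1 < p \<Longrightarrow> digit_sum p (Suc m) = Suc m mod p + digit_sum p (Suc m div p)"
  and digit_sum_numeral [simp]:
    "1 < p \<Longrightarrow> digit_sum p (numeral w) = numeral w mod p + digit_sum p (numeral w div p)"
  by (rule digit_sum_eq, assumption)+

lemma digit_sum_pos:
  assumes "1 < p" and "0 < m"
  shows "1 \<le> digit_sum p m"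
  using assms(2)
proof (induction m rule: less_induct)
  case (less m)
  show ?case
  proof (cases "p dvd m")
    case True
    then have "0 < m div p" "m div p < m"
      using less.prems assms(1) by (auto simp: div_greater_zero_iff dvd_imp_le)
    then show ?thesis
      using less.IH[of "m div p"] digit_sum_eq[OF assms(1), of m] by simp
  next
    case False
    then show ?thesis
      using digit_sum_eq[OF assms(1), of m] by (simp add: dvd_eq_mod_eq_0)
  qed
qed

lemma multiplicity_Suc_digit_sum:
  assumes p: "prime p"
  shows "(p - 1) * multiplicity p (Suc m) + digit_sum p (Suc m) = digit_sum p m + 1"
proof (induction m rule: less_induct)
  case (less m)
  have p1: "1 < p" using p prime_gt_1_nat by blast
  show ?case
  proof (cases "p dvd Suc m")
    case False
    then have "Suc m mod p = Suc (m mod p)" "Suc m div p = m div p"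
      using p1 by (auto simp: mod_Suc div_Suc dvd_eq_mod_eq_0 split: if_splits)
    then show ?thesis
      using False digit_sum_eq[OF p1, of m] digit_sum_eq[OF p1, of "Suc m"]
      by (simp add: not_dvd_imp_multiplicity_0)
  next
    case True
    then obtain q where q: "Suc m = p * q" ..
    then have "0 < q" by (cases q) auto
    have m: "m = p * (q - 1) + (p - 1)"
      using q \<open>0 < q\<close> p1 by (cases q) (auto simp: algebra_simps)
    have mod_div: "(p * (q - 1) + r) mod p = r" "(p * (q - 1) + r) div p = q - 1" if "r < p" for r
      using that by simp_all
    have m_mod: "m mod p = p - 1"
      unfolding m by (rule mod_div(1)) (use p1 in simp)
    have m_div: "m div p = q - 1"
      unfolding m by (rule mod_div(2)) (use p1 in simp)
    have "q - 1 < m"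
      using p1 m_div m by (metis div_less_dividend less_one zero_less_diff add_gr_0)
    then have IH: "(p - 1) * multiplicity p q + digit_sum p q = digit_sum p (q - 1) + 1"
      using less.IH[of "q - 1"] \<open>0 < q\<close> by simp
    have "multiplicity p (Suc m) = Suc (multiplicity p q)"
      using multiplicity_times_same[of q p] p1 \<open>0 < q\<close> unfolding q by simp
    moreover have "digit_sum p m = (p - 1) + digit_sum p (q - 1)"
      using digit_sum_eq[OF p1, of m] m_mod m_div by simp
    moreover have "digit_sum p (Suc m) = digit_sum p q"
      using digit_sum_eq[OF p1, of "Suc m"] q p1 by simp
    ultimately show ?thesis
      using IH by (simp add: algebra_simps)
  qed
qed

lemma sum_multiplicity_digit_sum:
  assumes "prime p"
  shows "(p - 1) * (\<Sum>i=1..j. multiplicity p (a + i)) + digit_sum p (a + j) = j + digit_sum p a"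
proof (induction j)
  case (Suc j)
  have "(p - 1) * (\<Sum>i=1..Suc j. multiplicity p (a + i)) + digit_sum p (a + Suc j)
      = (p - 1) * (\<Sum>i=1..j. multiplicity p (a + i))
        + ((p - 1) * multiplicity p (Suc (a + j)) + digit_sum p (Suc (a + j)))"
    by (simp add: algebra_simps)
  also have "\<dots> = Suc j + digit_sum p a"
    using multiplicity_Suc_digit_sum[OF assms, of "a + j"] Suc.IH by simp
  finally show ?case .
qed simp

section \<open>The sets A_set k p\<close>

definition valuation_bound :: "nat \<Rightarrow> nat \<Rightarrow> nat \<Rightarrow> bool" where
  "valuation_bound k p a \<longleftrightarrow> (\<forall>j\<ge>1. k * (\<Sum>i=1..j. multiplicity p (a + i)) < j)"

text \<open>By sum_multiplicity_digit_sum, valuation_bound k p a amounts to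
  k (j + s a) < (p - 1) j + k s (a + j) for all j \<ge> 1, where s = digit_sum p. As s (a + j) \<ge> 1,
  the first conjunct settles every j \<ge> J, leaving finitely many j to check.\<close>
definition digit_sum_certificate :: "nat \<Rightarrow> nat \<Rightarrow> nat \<Rightarrow> nat \<Rightarrow> bool" where
  "digit_sum_certificate k p J a \<longleftrightarrow> k * digit_sum p a < (p - 1 - k) * J + k \<and>
     (\<forall>j\<in>{1..<J}. k * (j + digit_sum p a) < (p - 1) * j + k * digit_sum p (a + j))"

lemma valuation_bound_if_certificate:
  assumes p: "prime p" and k: "k < p - 1" and cert: "digit_sum_certificate k p J a"
  shows "valuation_bound k p a"
  unfolding valuation_bound_def
proof (intro allI impI)
  fix j :: nat assume "1 \<le> j"
  let ?S = "\<Sum>i=1..j. multiplicity p (a + i)"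
  have "k * (j + digit_sum p a) < (p - 1) * j + k * digit_sum p (a + j)"
  proof (cases "j < J")
    case True
    then show ?thesis using cert \<open>1 \<le> j\<close> unfolding digit_sum_certificate_def by auto
  next
    case False
    have "k \<le> k * digit_sum p (a + j)"
      using digit_sum_pos[of p "a + j"] prime_gt_1_nat[OF p] \<open>1 \<le> j\<close> by simp
    moreover have "(p - 1 - k) * J \<le> (p - 1 - k) * j"
      using False by simp
    moreover have "(p - 1) * j = (p - 1 - k) * j + k * j"
      using k by (metis add_mult_distrib le_add_diff_inverse2 less_imp_le)
    moreover have "k * digit_sum p a < (p - 1 - k) * J + k"
      using cert unfolding digit_sum_certificate_def by simp
    ultimately show ?thesis
      unfolding distrib_left by linarith
  qed
  moreover have "(p - 1) * (k * ?S) + k * digit_sum p (a + j) = k * (j + digit_sum p a)"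
    using arg_cong[OF sum_multiplicity_digit_sum[OF p, of a j], of "\<lambda>x. k * x"]
    by (simp add: algebra_simps)
  ultimately have "(p - 1) * (k * ?S) < (p - 1) * j"
    unfolding distrib_left by linarith
  then show "k * ?S < j"
    by simp
qed

lemma A_set_1_3_certificate: "a \<in> A_set 1 3 \<Longrightarrow> digit_sum_certificate 1 3 5 a"
proof -
  assume "a \<in> A_set 1 3"
  then have "\<exists>r\<in>set [0..<17]. a \<in> set [3*r, 3*r+1]" "a \<notin> {7,16,24,25,34,43}"
    unfolding A_set_def by auto
  moreover have "\<forall>r\<in>set [0..<17]. \<forall>m\<in>set [3*r, 3*r+1].
      m \<notin> {7,16,24,25,34,43} \<longrightarrow> digit_sum_certificate 1 3 5 m"
    by (simp add: upt_rec digit_sum_certificate_def atLeastLessThan_nat_numeral)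
  ultimately show ?thesis by blast
qed

lemma A_set_1_5_certificate: "a \<in> A_set 1 5 \<Longrightarrow> digit_sum_certificate 1 5 3 a"
proof -
  assume "a \<in> A_set 1 5"
  then have "a = 50 \<or> (\<exists>r\<in>set [0..<10]. a \<in> set [5*r, 5*r+1, 5*r+2, 5*r+3])" "a \<notin> {23,48}"
    unfolding A_set_def by auto
  moreover have "\<forall>r\<in>set [0..<10]. \<forall>m\<in>set [5*r, 5*r+1, 5*r+2, 5*r+3].
      m \<notin> {23,48} \<longrightarrow> digit_sum_certificate 1 5 3 m"
    and "digit_sum_certificate 1 5 3 50"
    by (simp_all add: upt_rec digit_sum_certificate_def atLeastLessThan_nat_numeral)
  ultimately show ?thesis by blast
qed

lemma A_set_1_7_certificate: "a \<in> A_set 1 7 \<Longrightarrow> digit_sum_certificate 1 7 2 a"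
proof -
  assume "a \<in> A_set 1 7"
  then have "a \<in> set [0..<51]" "a \<notin> {6,13,20,27,34,41,47,48}"
    unfolding A_set_def by auto
  moreover have "\<forall>m\<in>set [0..<51]. m \<notin> {6,13,20,27,34,41,47,48} \<longrightarrow> digit_sum_certificate 1 7 2 m"
    by (simp add: upt_rec digit_sum_certificate_def atLeastLessThan_nat_numeral)
  ultimately show ?thesis by blast
qed

lemma A_set_2_5_certificate: "a \<in> A_set 2 5 \<Longrightarrow> digit_sum_certificate 2 5 6 a"
proof -
  assume "a \<in> A_set 2 5"
  then have "a \<in> {45, 50} \<or> (\<exists>r\<in>set [0..<9]. a \<in> set [5*r, 5*r+1, 5*r+2])" "a \<notin> {21,22}"
    unfolding A_set_def by auto
  moreover have "\<forall>r\<in>set [0..<9]. \<forall>m\<in>set [5*r, 5*r+1, 5*r+2].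
      m \<notin> {21,22} \<longrightarrow> digit_sum_certificate 2 5 6 m"
    and "\<forall>m\<in>{45, 50}. digit_sum_certificate 2 5 6 m"
    by (simp_all add: upt_rec digit_sum_certificate_def atLeastLessThan_nat_numeral)
  ultimately show ?thesis by blast
qed

lemma A_set_2_7_certificate: "a \<in> A_set 2 7 \<Longrightarrow> digit_sum_certificate 2 7 5 a"
proof -
  assume "a \<in> A_set 2 7"
  then have "a \<in> set [0..<51]" "a \<notin> {45,46}" "\<forall>r\<in>set [1..<8]. a \<noteq> 7*r-1 \<and> a \<noteq> 7*r-2"
    unfolding A_set_def by auto
  moreover have "\<forall>m\<in>set [0..<51]. m \<notin> {45,46} \<longrightarrow> (\<forall>r\<in>set [1..<8]. m \<noteq> 7*r-1 \<and> m \<noteq> 7*r-2)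
      \<longrightarrow> digit_sum_certificate 2 7 5 m"
    by (simp add: upt_rec digit_sum_certificate_def atLeastLessThan_nat_numeral)
  ultimately show ?thesis by blast
qed

lemma A_set_3_5_certificate: "a \<in> A_set 3 5 \<Longrightarrow> digit_sum_certificate 3 5 10 a"
proof -
  assume "a \<in> A_set 3 5"
  then have "a \<in> set [0,1,5,6,10,11,15,25,26,30,31,35,36,40,50]"
    unfolding A_set_def by simp
  moreover have "\<forall>m\<in>set [0,1,5,6,10,11,15,25,26,30,31,35,36,40,50]. digit_sum_certificate 3 5 10 m"
    by (simp add: upt_rec digit_sum_certificate_def atLeastLessThan_nat_numeral)
  ultimately show ?thesis by blast
qed

lemma A_set_3_7_certificate: "a \<in> A_set 3 7 \<Longrightarrow> digit_sum_certificate 3 7 8 a"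
proof -
  assume "a \<in> A_set 3 7"
  then have "a \<in> {42,49,50} \<or> (\<exists>r\<in>set [0..<6]. a \<in> set [7*r, 7*r+1, 7*r+2, 7*r+3])"
    unfolding A_set_def by auto
  moreover have "\<forall>r\<in>set [0..<6]. \<forall>m\<in>set [7*r, 7*r+1, 7*r+2, 7*r+3]. digit_sum_certificate 3 7 8 m"
    and "\<forall>m\<in>{42,49,50}. digit_sum_certificate 3 7 8 m"
    by (simp_all add: upt_rec digit_sum_certificate_def atLeastLessThan_nat_numeral)
  ultimately show ?thesis by blast
qed

lemma A_set_4_7_certificate: "a \<in> A_set 4 7 \<Longrightarrow> digit_sum_certificate 4 7 11 a"
proof -
  assume "a \<in> A_set 4 7"
  then have "a \<in> {35,36,49,50} \<or> (\<exists>r\<in>set [0..<5]. a \<in> set [7*r, 7*r+1, 7*r+2])"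
    unfolding A_set_def by auto
  moreover have "\<forall>r\<in>set [0..<5]. \<forall>m\<in>set [7*r, 7*r+1, 7*r+2]. digit_sum_certificate 4 7 11 m"
    and "\<forall>m\<in>{35,36,49,50}. digit_sum_certificate 4 7 11 m"
    by (simp_all add: upt_rec digit_sum_certificate_def atLeastLessThan_nat_numeral)
  ultimately show ?thesis by blast
qed

lemma A_set_5_7_certificate: "a \<in> A_set 5 7 \<Longrightarrow> digit_sum_certificate 5 7 16 a"
proof -
  assume "a \<in> A_set 5 7"
  then have "a \<in> set [0,1,7,8,14,15,21,22,28,49,50]"
    unfolding A_set_def by simp
  moreover have "\<forall>m\<in>set [0,1,7,8,14,15,21,22,28,49,50]. digit_sum_certificate 5 7 16 m"
    by (simp add: upt_rec digit_sum_certificate_def atLeastLessThan_nat_numeral)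
  ultimately show ?thesis by blast
qed

lemma A_set_valuation_bound:
  assumes "(k, p) \<in> {(1,3), (1,5), (1,7), (2,5), (2,7), (3,5), (3,7), (4,7), (5,7)}"
    and "a \<in> A_set k p"
  shows "valuation_bound k p a"
proof -
  have "prime p" "k < p - 1"
    using assms(1) by auto
  moreover have "\<exists>J. digit_sum_certificate k p J a"
    using assms A_set_1_3_certificate A_set_1_5_certificate A_set_1_7_certificate
      A_set_2_5_certificate A_set_2_7_certificate A_set_3_5_certificate A_set_3_7_certificate
      A_set_4_7_certificate A_set_5_7_certificate
    by (auto; blast)
  ultimately show ?thesis
    using valuation_bound_if_certificate by blast
qed

section \<open>Clearing denominators\<close>

definition fact_quot :: "nat \<Rightarrow> nat \<Rightarrow> nat \<Rightarrow> nat" where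
  "fact_quot n a j = (\<Prod>i\<in>{j+1..n}. i + a)"

lemma fact_mult_fact_quot: "j \<le> n \<Longrightarrow> fact (j + a) * fact_quot n a j = (fact (n + a) :: nat)"
proof (induction n rule: dec_induct)
  case (step m)
  have "{j+1..Suc m} = insert (Suc m) {j+1..m}"
    using step by auto
  then have "fact_quot (Suc m) a j = (Suc m + a) * fact_quot m a j"
    unfolding fact_quot_def by simp
  then show ?case
    using step.IH by (simp add: algebra_simps)
qed (simp add: fact_quot_def)

lemma fact_quot_self [simp]: "fact_quot n a n = 1"
  by (simp add: fact_quot_def)

lemma fact_quot_neq_0 [simp]: "fact_quot n a j \<noteq> 0"
  by (simp add: fact_quot_def)

lemma dvd_fact_quot: "j < m \<Longrightarrow> m \<le> n \<Longrightarrow> q dvd m + a \<Longrightarrow> q dvd fact_quot n a j"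
  unfolding fact_quot_def by (rule dvd_trans, assumption, rule dvd_prodI) auto

lemma multiplicity_fact_quot:
  "prime p \<Longrightarrow> multiplicity p (fact_quot n a j) = (\<Sum>i\<in>{j+1..n}. multiplicity p (i + a))"
  unfolding fact_quot_def by (intro prime_elem_multiplicity_prod_distrib) auto

lemma binomial_mult_fact_quot:
  assumes "j \<le> n"
  shows "(n choose j) * fact_quot n a j = (n + a choose (n - j)) * fact_quot n 0 j"
proof -
  define X :: nat where "X = fact (n - j) * fact j * fact (j + a)"
  have "(n choose j) * fact_quot n a j * X
      = (fact j * fact (n - j) * (n choose j)) * (fact (j + a) * fact_quot n a j)"
    unfolding X_def by (simp add: algebra_simps)
  also have "\<dots> = fact n * fact (n + a)"
    using binomial_fact_lemma[OF assms] fact_mult_fact_quot[OF assms] by simp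
  also have "\<dots> = (fact (n - j) * fact (n + a - (n - j)) * (n + a choose (n - j)))
      * (fact (j + 0) * fact_quot n 0 j)"
    using binomial_fact_lemma[of "n - j" "n + a"] fact_mult_fact_quot[OF assms, of 0] by simp
  also have "\<dots> = (n + a choose (n - j)) * fact_quot n 0 j * X"
    using assms unfolding X_def by (simp add: algebra_simps)
  finally show ?thesis
    unfolding X_def by simp
qed

lemma multiplicity_of_nat:
  assumes "1 < p" and "x \<noteq> 0"
  shows "multiplicity (int p) (int x) = multiplicity p x"
proof -
  have "m \<le> multiplicity (int p) (int x) \<longleftrightarrow> m \<le> multiplicity p x" for m
  proof -
    have "m \<le> multiplicity (int p) (int x) \<longleftrightarrow> int p ^ m dvd int x"
      using assms by (simp add: power_dvd_iff_le_multiplicity)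
    also have "\<dots> \<longleftrightarrow> p ^ m dvd x"
      by (simp only: Power.of_nat_power[symmetric] int_dvd_int_iff)
    also have "\<dots> \<longleftrightarrow> m \<le> multiplicity p x"
      using assms by (simp add: power_dvd_iff_le_multiplicity)
    finally show ?thesis .
  qed
  then show ?thesis
    by (meson le_antisym order_refl)
qed

definition scaled_poly :: "(nat \<Rightarrow> int) \<Rightarrow> nat \<Rightarrow> nat \<Rightarrow> int poly" where
  "scaled_poly d n a = (\<Sum>j\<le>n. monom (d j * int (fact_quot n a j)) j)"

lemma coeff_scaled_poly:
  "coeff (scaled_poly d n a) j = (if j \<le> n then d j * int (fact_quot n a j) else 0)"
  by (simp add: scaled_poly_def coeff_sum coeff_monom)

lemma of_int_scaled_poly_fpoly:
  "map_poly of_int (scaled_poly c n a) = Polynomial.smult (fact (n + a)) (fpoly c n a)"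
proof (rule poly_eqI)
  fix j
  have "(fact (n + a) :: rat) = fact (j + a) * of_nat (fact_quot n a j)" if "j \<le> n"
    using arg_cong[OF fact_mult_fact_quot[OF that, of a], of "of_nat :: nat \<Rightarrow> rat"]
    by (simp add: of_nat_fact)
  then show "coeff (map_poly of_int (scaled_poly c n a)) j
      = coeff (Polynomial.smult (fact (n + a)) (fpoly c n a)) j"
    by (simp add: coeff_map_poly coeff_scaled_poly fpoly_def coeff_sum coeff_monom field_simps)
qed

lemma of_int_scaled_poly_laguerre:
  "map_poly of_int (scaled_poly (\<lambda>j. (-1) ^ j * int (n choose j)) n a)
     = Polynomial.smult (fact n) (laguerre n a)"
proof (rule poly_eqI)
  fix j
  have "(fact n :: rat) = fact j * fact (n - j) * of_nat (n choose j)" if "j \<le> n"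
    using arg_cong[OF binomial_fact_lemma[OF that], of "of_nat :: nat \<Rightarrow> rat"]
    by (simp add: of_nat_fact)
  moreover have "(\<Prod>i\<in>{j+1..n}. of_nat (i + a) :: rat) = of_nat (fact_quot n a j)"
    by (simp add: fact_quot_def)
  ultimately show "coeff (map_poly of_int (scaled_poly (\<lambda>j. (-1) ^ j * int (n choose j)) n a)) j
      = coeff (Polynomial.smult (fact n) (laguerre n a)) j"
    by (simp add: coeff_map_poly coeff_scaled_poly laguerre_def coeff_sum coeff_monom field_simps)
qed

lemma has_factor_of_degree_smult:
  "r \<noteq> 0 \<Longrightarrow> has_factor_of_degree (Polynomial.smult r f) k \<longleftrightarrow> has_factor_of_degree f k"
  by (simp add: has_factor_of_degree_def dvd_smult_iff)

lemma weighted_valuation_scaled_poly_0_less: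
  assumes p: "prime p" and bound: "valuation_bound k p a" and d0: "\<not> int p dvd d 0"
    and j: "0 < j" and nz: "coeff (scaled_poly d n a) j \<noteq> 0"
  shows "weighted_valuation (int p) k (scaled_poly d n a) 0
           < weighted_valuation (int p) k (scaled_poly d n a) j"
proof -
  let ?v = "multiplicity (int p)" and ?m = "\<lambda>i. multiplicity p (i + a)"
  have p1: "1 < p" using p prime_gt_1_nat by blast
  have jn: "j \<le> n" and dj: "d j \<noteq> 0"
    using nz by (auto simp: coeff_scaled_poly split: if_splits)
  have v_mult: "?v (x * int (fact_quot n a i)) = ?v x + (\<Sum>l\<in>{i+1..n}. ?m l)" if "x \<noteq> 0" for x i
    using prime_elem_multiplicity_mult_distrib[of "int p" x] that p p1
    by (simp add: multiplicity_of_nat multiplicity_fact_quot)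
  have "d 0 \<noteq> 0"
    using d0 by auto
  then have "?v (coeff (scaled_poly d n a) 0) = (\<Sum>l\<in>{1..n}. ?m l)"
    using v_mult[of "d 0" 0] d0 by (auto simp: coeff_scaled_poly not_dvd_imp_multiplicity_0)
  also have "\<dots> = (\<Sum>l\<in>{1..j}. ?m l) + (\<Sum>l\<in>{j+1..n}. ?m l)"
    using j jn by (subst sum.union_disjoint[symmetric]) (auto intro: sum.cong)
  finally have v0:
    "?v (coeff (scaled_poly d n a) 0) = (\<Sum>l\<in>{1..j}. ?m l) + (\<Sum>l\<in>{j+1..n}. ?m l)" .
  have vj: "(\<Sum>l\<in>{j+1..n}. ?m l) \<le> ?v (coeff (scaled_poly d n a) j)"
    using v_mult[OF dj, of j] jn by (simp add: coeff_scaled_poly)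
  have "k * (\<Sum>l\<in>{1..j}. ?m l) < j"
    using bound j unfolding valuation_bound_def by (simp add: add.commute)
  then show ?thesis
    using mult_le_mono2[OF vj, of k] unfolding weighted_valuation_def v0 distrib_left by linarith
qed

lemma scaled_poly_no_factor_of_degree:
  assumes p: "prime p" and k: "1 \<le> k" "k \<le> n" and bound: "valuation_bound k p a"
    and d0: "\<not> int p dvd d 0" and dn: "\<not> int p dvd d n"
    and low: "\<And>j. j \<le> n - k \<Longrightarrow> int p dvd d j * int (fact_quot n a j)"
  shows "\<not> has_factor_of_degree (map_poly of_int (scaled_poly d n a)) k"
proof
  let ?F = "scaled_poly d n a"
  assume "has_factor_of_degree (map_poly of_int ?F) k"
  then obtain g :: "rat poly" where "degree g = k" and "g dvd map_poly of_int ?F"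
    unfolding has_factor_of_degree_def by blast
  from \<open>g dvd map_poly of_int ?F\<close> obtain h where gh: "map_poly of_int ?F = g * h"
    by (rule dvdE)
  obtain G H where F: "?F = G * H" and deg_G: "degree G = k"
    using rat_to_int_factor[OF gh] \<open>degree g = k\<close> by auto
  have "d n \<noteq> 0"
    using dn by auto
  then have "degree ?F = n"
    by (intro antisym degree_le le_degree) (auto simp: coeff_scaled_poly)
  then have lead: "lead_coeff ?F = d n"
    by (simp add: coeff_scaled_poly)
  with \<open>d n \<noteq> 0\<close> F have "G \<noteq> 0" "H \<noteq> 0"
    by auto
  then have "degree ?F = k + degree H"
    using F deg_G by (simp add: degree_mult_eq)
  with \<open>degree ?F = n\<close> have "degree H = n - k"
    by simp
  show False
  proof (rule weighted_valuation_no_factor_of_degree[of "int p" k G H])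
    show "prime_elem (int p)"
      using p by simp
    show "\<not> int p dvd lead_coeff (G * H)"
      using lead dn unfolding F[symmetric] by simp
    show "int p dvd coeff (G * H) j" if "j \<le> degree H" for j
      using low[of j] that \<open>degree H = n - k\<close> unfolding F[symmetric] by (simp add: coeff_scaled_poly)
    show "coeff (G * H) 0 \<noteq> 0"
      using d0 unfolding F[symmetric] by (auto simp: coeff_scaled_poly)
    show "weighted_valuation (int p) k (G * H) 0 < weighted_valuation (int p) k (G * H) j"
      if "0 < j" "coeff (G * H) j \<noteq> 0" for j
      using weighted_valuation_scaled_poly_0_less[where d = d, OF p bound d0] that unfolding F[symmetric] by simp
  qed (use k deg_G in auto)
qed

lemma fpoly_no_factor_of_degree:
  assumes p: "prime p" and k: "1 \<le> k" "k \<le> n" and bound: "valuation_bound k p a"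
    and dvd: "p dvd (\<Prod>i=1..k. a + n - k + i)" and ndvd: "\<not> int p dvd c 0 * c n"
  shows "\<not> has_factor_of_degree (fpoly c n a) k"
proof -
  obtain i where i: "i \<in> {1..k}" "p dvd a + n - k + i"
    using dvd p by (auto simp: prime_dvd_prod_iff)
  have "\<not> has_factor_of_degree (map_poly of_int (scaled_poly c n a)) k"
  proof (rule scaled_poly_no_factor_of_degree[OF p k bound])
    show "\<not> int p dvd c 0" "\<not> int p dvd c n"
      using ndvd by (auto simp: dvd_mult dvd_mult2)
    show "int p dvd c j * int (fact_quot n a j)" if "j \<le> n - k" for j
    proof -
      have "a + n - k + i = (n - k + i) + a"
        using k by simp
      then have "j < n - k + i" "n - k + i \<le> n" "p dvd (n - k + i) + a"
        using i that k by auto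
      then have "p dvd fact_quot n a j"
        by (rule dvd_fact_quot)
      then show ?thesis
        by (intro dvd_mult) simp
    qed
  qed
  then show ?thesis
    by (simp add: of_int_scaled_poly_fpoly has_factor_of_degree_smult)
qed

lemma laguerre_no_factor_of_degree:
  assumes p: "prime p" and k: "1 \<le> k" "k \<le> n" and bound: "valuation_bound k p a"
    and dvd: "p dvd (\<Prod>i=1..k. (n - k + i) * (a + n - k + i))"
  shows "\<not> has_factor_of_degree (laguerre n a) k"
proof -
  obtain i where i: "i \<in> {1..k}" "p dvd (n - k + i) * (a + n - k + i)"
    using dvd p by (auto simp: prime_dvd_prod_iff)
  have "a + n - k + i = (n - k + i) + a"
    using k by simp
  then have i_dvd: "p dvd (n - k + i) + 0 \<or> p dvd (n - k + i) + a"
    using i(2) p by (metis add_0_right prime_dvd_mult_iff)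
  have "\<not> has_factor_of_degree
      (map_poly of_int (scaled_poly (\<lambda>j. (-1) ^ j * int (n choose j)) n a)) k"
  proof (rule scaled_poly_no_factor_of_degree[OF p k bound])
    have unit_not_dvd: "\<not> int p dvd u" if "is_unit u" for u
    proof
      assume "int p dvd u"
      then have "is_unit (int p)"
        using that by (rule dvd_unit_imp_unit)
      then show False
        using prime_gt_1_nat[OF p] by simp
    qed
    show "\<not> int p dvd (-1) ^ 0 * int (n choose 0)" "\<not> int p dvd (-1) ^ n * int (n choose n)"
      by (rule unit_not_dvd, simp)+
    show "int p dvd (-1) ^ j * int (n choose j) * int (fact_quot n a j)" if "j \<le> n - k" for j
    proof -
      have "j < n - k + i" "n - k + i \<le> n"
        using i that k by auto
      \<comment> \<open>If p divides n - k + i, it divides n!/j!, which binomial_mult_fact_quot trades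
        for the product of the binomial coefficient and fact_quot n a j.\<close>
      have "p dvd (n choose j) * fact_quot n a j"
        using i_dvd
      proof
        assume "p dvd (n - k + i) + 0"
        with \<open>j < n - k + i\<close> \<open>n - k + i \<le> n\<close> have "p dvd fact_quot n 0 j"
          by (rule dvd_fact_quot)
        then show ?thesis
          using binomial_mult_fact_quot[of j n a] that by simp
      next
        assume "p dvd (n - k + i) + a"
        with \<open>j < n - k + i\<close> \<open>n - k + i \<le> n\<close> have "p dvd fact_quot n a j"
          by (rule dvd_fact_quot)
        then show ?thesis
          by simp
      qed
      then show ?thesis
        by (metis dvd_mult int_dvd_int_iff mult.assoc of_nat_mult)
    qed
  qed
  then show ?thesis
    by (simp add: of_int_scaled_poly_laguerre has_factor_of_degree_smult)
qed

theorem corollary2p1: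
  fixes k p n a :: nat and c :: "nat \<Rightarrow> int"
  assumes kp: "(k, p) \<in> {(1,3), (1,5), (1,7), (2,5), (2,7), (3,5), (3,7), (4,7), (5,7)}"
    and n: "n \<ge> 2 * k"
    and a: "a \<in> A_set k p"
  shows "(p dvd (\<Prod>i=1..k. a + n - k + i) \<and> \<not> int p dvd (c 0 * c n)
            \<longrightarrow> \<not> has_factor_of_degree (fpoly c n a) k)
       \<and> (p dvd (\<Prod>i=1..k. (n - k + i) * (a + n - k + i))
            \<longrightarrow> \<not> has_factor_of_degree (laguerre n a) k)"
proof -
  have p: "prime p" and k: "1 \<le> k"
    using kp by auto
  have "k \<le> n"
    using n by simp
  moreover have "valuation_bound k p a"
    using kp a by (rule A_set_valuation_bound)
  ultimately show ?thesis
    using fpoly_no_factor_of_degree[OF p k] laguerre_no_factor_of_degree[OF p k] by blast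
qed

end
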